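(* Fix $n\ge 2$. For any $\epsilon>0$ and any tuple $(\mu_1,\dots,\mu_{n-2})\in\mathbb{R}^{n-2}$, there exists a matrix $A\in SL(n,\mathbb{Z})$ which is diagonalizable over $\mathbb{R}$ (so all its eigenvalues are real) such that its eigenvalues $\lambda_1,\dots,\lambda_n$ can be ordered so that (1) $|\lambda_i-\mu_i|<\epsilon$ for $1\le i\le n-2$; (2) $|\lambda_{n-1}|>1/\epsilon$ and $|\lambda_n|<\epsilon$. *)

theory Defs
  imports Complex_Main "Jordan_Normal_Form.Determinant"
begin

end

theory Submission
  imports Defs
begin

text \<open>Choose distinct nonzero rationals \<open>r\<^sub>i = a\<^sub>i / b\<close> close to the \<open>\<mu>\<^sub>i\<close> and consider the
  integer polynomial \<open>P(x) = x\<^sup>n + (-1)\<^sup>n - K x \<Prod>\<^sub>i (b x - a\<^sub>i)\<close>. For a large integer \<open>K\<close>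
  the perturbation dominates near the points \<open>r\<^sub>i\<close> and \<open>0\<close>, where it changes sign, so \<open>P\<close> has
  \<open>n - 1\<close> real roots close to these points. The product of all roots of \<open>P\<close> is \<open>1\<close>, so the
  remaining root is huge. With \<open>n\<close> distinct real roots, the companion matrix of \<open>P\<close> lies in
  \<open>SL(n, \<int>)\<close> and is diagonalised by the Vandermonde matrix of its roots.\<close>

definition vandermonde_mat :: "nat \<Rightarrow> (nat \<Rightarrow> 'a::comm_ring_1) \<Rightarrow> 'a mat" where
  "vandermonde_mat n x = mat n n (\<lambda>(i, k). x k ^ i)"

definition companion_mat :: "'a::comm_ring_1 poly \<Rightarrow> 'a mat" where
  "companion_mat p = mat (degree p) (degree p)
     (\<lambda>(i, j). if Suc i = j then 1 else if Suc i = degree p then - coeff p j else 0)"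

lemma vandermonde_mat_carrier [simp]: "vandermonde_mat n x \<in> carrier_mat n n"
  by (simp add: vandermonde_mat_def)

lemma companion_mat_carrier [simp]: "companion_mat p \<in> carrier_mat (degree p) (degree p)"
  by (simp add: companion_mat_def)

lemma det_mat_diag: "det (mat_diag n (f :: nat \<Rightarrow> 'a::comm_ring_1)) = (\<Prod>i<n. f i)"
proof -
  have "det (mat_diag n f) = prod_list (diag_mat (mat_diag n f))"
    by (rule det_upper_triangular) (auto simp: upper_triangular_def mat_diag_def)
  also have "diag_mat (mat_diag n f) = map f [0..<n]"
    by (auto simp: diag_mat_def mat_diag_def intro: nth_equalityI)
  finally show ?thesis
    by (simp add: prod.list_conv_set_nth lessThan_atLeast0)
qed

lemma det_vandermonde_mat_nonzero:
  fixes x :: "nat \<Rightarrow> 'a::field"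
  assumes "inj_on x {..<n}"
  shows "det (vandermonde_mat n x) \<noteq> 0"
proof
  let ?V = "vandermonde_mat n x"
  assume "det ?V = 0"
  hence "det (transpose_mat ?V) = 0" by (subst det_transpose[of _ n]) auto
  then obtain v where v: "v \<in> carrier_vec n" "v \<noteq> 0\<^sub>v n" "transpose_mat ?V *\<^sub>v v = 0\<^sub>v n"
    using det_0_iff_vec_prod_zero[of "transpose_mat ?V" n] by auto
  from v obtain i0 where i0: "i0 < n" "v $ i0 \<noteq> 0"
    by (metis eq_vecI carrier_vecD index_zero_vec(1,2))
  \<comment> \<open>a nonzero polynomial of degree below \<open>n\<close> vanishing at the \<open>n\<close> distinct points \<open>x k\<close>\<close>
  define q where "q = (\<Sum>i<n. monom (v $ i) i)"
  have coeff_q: "coeff q j = (if j < n then v $ j else 0)" for j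
    unfolding q_def by (simp add: coeff_sum coeff_monom)
  have "q \<noteq> 0" using coeff_q[of i0] i0 by auto
  have "degree q \<le> n - 1" by (rule degree_le) (auto simp: coeff_q)
  hence "degree q < n" using i0 by linarith
  have "poly q (x k) = 0" if "k < n" for k
  proof -
    have "(transpose_mat ?V *\<^sub>v v) $ k = 0" using v(3) that by simp
    thus ?thesis using that v(1)
      by (simp add: q_def poly_sum poly_monom vandermonde_mat_def scalar_prod_def lessThan_atLeast0 mult.commute)
  qed
  hence "x ` {..<n} \<subseteq> {z. poly q z = 0}" by auto
  hence "card (x ` {..<n}) \<le> card {z. poly q z = 0}"
    by (intro card_mono poly_roots_finite \<open>q \<noteq> 0\<close>)
  also have "\<dots> \<le> degree q" by (rule card_poly_roots_bound[OF \<open>q \<noteq> 0\<close>])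
  finally show False using card_image[OF assms] \<open>degree q < n\<close> by simp
qed

lemma companion_mat_mult_vandermonde:
  fixes p :: "'a::comm_ring_1 poly"
  assumes monic: "lead_coeff p = 1" and roots: "\<And>k. k < degree p \<Longrightarrow> poly p (x k) = 0"
  shows "companion_mat p * vandermonde_mat (degree p) x
       = vandermonde_mat (degree p) x * mat_diag (degree p) x"
    (is "?C * ?V = ?V * ?D")
proof (rule eq_matI)
  let ?n = "degree p"
  fix i k assume "i < dim_row (?V * ?D)" "k < dim_col (?V * ?D)"
  hence i: "i < ?n" and k: "k < ?n" by (auto simp: vandermonde_mat_def mat_diag_def)
  have "(?C * ?V) $$ (i, k)
      = (\<Sum>j<?n. (if Suc i = j then 1 else if Suc i = ?n then - coeff p j else 0) * x k ^ j)"
    using i k by (auto simp: companion_mat_def vandermonde_mat_def scalar_prod_def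
        lessThan_atLeast0 intro!: sum.cong)
  also have "\<dots> = x k ^ Suc i"
  proof (cases "Suc i = ?n")
    case True
    have "0 = poly p (x k)" using roots[OF k] by simp
    also have "\<dots> = (\<Sum>j<?n. coeff p j * x k ^ j) + x k ^ ?n"
      using monic by (simp add: poly_altdef lessThan_Suc_atMost[symmetric])
    finally have "x k ^ ?n = - (\<Sum>j<?n. coeff p j * x k ^ j)"
      by (simp add: eq_neg_iff_add_eq_0 add.commute)
    thus ?thesis using True by (simp add: sum_negf)
  next
    case False
    hence "(\<Sum>j<?n. (if Suc i = j then 1 else if Suc i = ?n then - coeff p j else 0) * x k ^ j)
        = (\<Sum>j<?n. if Suc i = j then x k ^ j else 0)"
      by (intro sum.cong) auto
    thus ?thesis using False i by simp
  qed
  also have "\<dots> = (?V * ?D) $$ (i, k)"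
    using i k by (simp add: mat_diag_mult_right[of _ ?n] vandermonde_mat_def)
  finally show "(?C * ?V) $$ (i, k) = (?V * ?D) $$ (i, k)" .
qed (auto simp: companion_mat_def vandermonde_mat_def mat_diag_def)

lemma similar_companion_mat_diag:
  fixes p :: "'a::field poly"
  assumes "lead_coeff p = 1" and "inj_on x {..<degree p}"
    and "\<And>k. k < degree p \<Longrightarrow> poly p (x k) = 0"
  shows "similar_mat (companion_mat p) (mat_diag (degree p) x)"
proof -
  let ?n = "degree p" and ?V = "vandermonde_mat (degree p) x" and ?D = "mat_diag (degree p) x"
  have "det ?V \<noteq> 0" by (rule det_vandermonde_mat_nonzero[OF assms(2)])
  then obtain W where W: "W \<in> carrier_mat ?n ?n" "?V * W = 1\<^sub>m ?n" "W * ?V = 1\<^sub>m ?n"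
    using det_non_zero_imp_unit[of ?V ?n] by (auto simp: Units_def ring_mat_def)
  have "companion_mat p = companion_mat p * (?V * W)"
    by (simp add: W(2) right_mult_one_mat[OF companion_mat_carrier])
  also have "\<dots> = (companion_mat p * ?V) * W"
    using assoc_mult_mat[OF companion_mat_carrier vandermonde_mat_carrier W(1)] by simp
  also have "\<dots> = ?V * ?D * W" by (simp add: companion_mat_mult_vandermonde assms)
  finally have "companion_mat p = ?V * ?D * W" .
  from similar_matI[OF _ W(2,3) this] show ?thesis using W(1) by simp
qed

lemma int_matrix_similar_diag_of_roots:
  fixes p :: "real poly" and x :: "nat \<Rightarrow> real"
  assumes p: "degree p = n" "lead_coeff p = 1" "\<And>j. coeff p j \<in> \<int>"
    and x: "inj_on x {..<n}" "\<And>k. k < n \<Longrightarrow> poly p (x k) = 0" "(\<Prod>k<n. x k) = 1"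
  shows "\<exists>A :: int mat. A \<in> carrier_mat n n \<and> det A = 1
           \<and> similar_mat (map_mat real_of_int A) (mat_diag n x)"
proof -
  define A where "A = map_mat floor (companion_mat p)"
  have floor_id: "of_int \<lfloor>v\<rfloor> = v" if "v \<in> \<int>" for v :: real
    using that by (metis Ints_cases floor_of_int)
  have A_real: "map_mat real_of_int A = companion_mat p"
  proof (rule eq_matI)
    fix i j assume "i < dim_row (companion_mat p)" "j < dim_col (companion_mat p)"
    thus "map_mat real_of_int A $$ (i, j) = companion_mat p $$ (i, j)"
      using floor_id[OF Ints_minus[OF p(3)[of j]]] by (simp add: A_def companion_mat_def)
  qed (simp_all add: A_def)
  have "similar_mat (companion_mat p) (mat_diag (degree p) x)"
    by (rule similar_companion_mat_diag) (use p x in auto)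
  hence sim: "similar_mat (map_mat real_of_int A) (mat_diag n x)" by (simp only: A_real p(1))
  have "real_of_int (det A) = det (map_mat real_of_int A)" by (rule of_int_hom.hom_det[symmetric])
  also have "\<dots> = det (mat_diag n x)" by (rule det_similar[OF sim])
  also have "\<dots> = 1" using x(3) by (simp add: det_mat_diag)
  finally have "det A = 1" by simp
  moreover have "A \<in> carrier_mat n n" using companion_mat_carrier[of p] p(1) by (simp add: A_def)
  ultimately show ?thesis using sim by blast
qed

lemma prod_linear_factors_dvd:
  fixes p :: "'a::idom poly"
  assumes "finite I" "inj_on e I" "\<And>i. i \<in> I \<Longrightarrow> poly p (e i) = 0"
  shows "(\<Prod>i\<in>I. [:- e i, 1:]) dvd p"
  using assms
proof (induction I rule: finite_induct)
  case empty
  thus ?case by simp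
next
  case (insert i0 I)
  then obtain q where q: "p = (\<Prod>i\<in>I. [:- e i, 1:]) * q"
    by (auto simp: inj_on_insert elim: dvdE)
  have "poly (\<Prod>i\<in>I. [:- e i, 1:]) (e i0) \<noteq> 0"
    using insert by (auto simp: poly_prod prod_zero_iff)
  moreover have "poly p (e i0) = 0" using insert.prems by simp
  ultimately have "[:- e i0, 1:] dvd q" by (simp add: q poly_eq_0_iff_dvd)
  hence "(\<Prod>i\<in>I. [:- e i, 1:]) * [:- e i0, 1:] dvd p"
    unfolding q by (rule mult_dvd_mono[OF dvd_refl])
  thus ?case by (simp only: prod.insert[OF insert.hyps] mult.commute)
qed

lemma monic_poly_last_root:
  fixes p :: "'a::idom poly"
  assumes "degree p = n" "lead_coeff p = 1" "n \<ge> 1" "finite I" "card I = n - 1"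
    and "inj_on e I" "\<And>i. i \<in> I \<Longrightarrow> poly p (e i) = 0"
  shows "\<exists>t. poly p t = 0 \<and> coeff p 0 = (-1) ^ n * (\<Prod>i\<in>I. e i) * t"
proof -
  define F where "F = (\<Prod>i\<in>I. [:- e i, 1:])"
  obtain q where q: "p = F * q"
    using prod_linear_factors_dvd[OF assms(4,6,7)] by (auto simp: F_def elim: dvdE)
  have "F \<noteq> 0" "q \<noteq> 0" using q assms(2) by (auto simp: F_def)
  have "degree F = n - 1" using assms(4,5) by (simp add: F_def degree_prod_eq_sum_degree)
  have "lead_coeff F = 1" unfolding F_def lead_coeff_prod by simp
  have "degree q = 1"
    using q assms(1,3) \<open>degree F = n - 1\<close> \<open>F \<noteq> 0\<close> \<open>q \<noteq> 0\<close> by (simp add: degree_mult_eq)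
  have "lead_coeff q = 1"
    using lead_coeff_mult[of F q] q assms(2) \<open>lead_coeff F = 1\<close> by simp
  have q_lin: "q = [:coeff q 0, 1:]"
  proof (rule poly_eqI)
    fix j
    show "coeff q j = coeff [:coeff q 0, 1:] j"
      using \<open>degree q = 1\<close> \<open>lead_coeff q = 1\<close>
      by (cases j) (auto simp: coeff_pCons coeff_eq_0 split: nat.split)
  qed
  define t where "t = - coeff q 0"
  have "poly p t = 0" by (subst q, subst q_lin) (simp add: t_def)
  moreover have "coeff p 0 = (-1) ^ n * (\<Prod>i\<in>I. e i) * t"
  proof -
    have "coeff p 0 = (\<Prod>i\<in>I. - e i) * - t"
      by (subst q, subst q_lin) (simp add: F_def t_def poly_0_coeff_0[symmetric] poly_prod)
    also have "(\<Prod>i\<in>I. - e i) = (-1) ^ (n - 1) * (\<Prod>i\<in>I. e i)"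
      using assms(5) by (simp add: prod_uminus)
    finally show ?thesis using assms(3) by (cases n) (simp_all add: algebra_simps)
  qed
  ultimately show ?thesis by blast
qed

text \<open>By Vieta's formula the missing root is the reciprocal of the product of the known ones, so
  it exceeds \<open>M\<close> in absolute value and differs from all of them.\<close>

lemma int_matrix_similar_diag_completing_roots:
  fixes p :: "real poly" and e :: "nat \<Rightarrow> real"
  assumes p: "degree p = n" "lead_coeff p = 1" "coeff p 0 = (-1) ^ n" "\<And>k. coeff p k \<in> \<int>"
    and "j < n" and e: "inj_on e ({..<n} - {j})"
      "\<And>i. i \<in> {..<n} - {j} \<Longrightarrow> poly p (e i) = 0 \<and> \<bar>e i\<bar> \<le> M"
    and small: "\<bar>\<Prod>i\<in>{..<n} - {j}. e i\<bar> < 1 / M"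
  shows "\<exists>A :: int mat. \<exists>t. A \<in> carrier_mat n n \<and> det A = 1
           \<and> similar_mat (map_mat real_of_int A) (mat_diag n (e(j := t))) \<and> M < \<bar>t\<bar>"
proof -
  let ?J = "{..<n} - {j}"
  have "card ?J = n - 1" using \<open>j < n\<close> by simp
  then obtain t where t: "poly p t = 0" "coeff p 0 = (-1) ^ n * (\<Prod>i\<in>?J. e i) * t"
    using monic_poly_last_root[of p n ?J e] p \<open>j < n\<close> e by auto
  hence prod_t: "(\<Prod>i\<in>?J. e i) * t = 1" using p(3) by simp
  have "0 < 1 / M" using le_less_trans[OF abs_ge_zero small] .
  hence "M * \<bar>\<Prod>i\<in>?J. e i\<bar> < 1" using small by (simp add: field_simps)
  also have "1 = \<bar>t\<bar> * \<bar>\<Prod>i\<in>?J. e i\<bar>" using prod_t by (simp add: abs_mult[symmetric] mult.commute)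
  finally have "M < \<bar>t\<bar>" by (rule mult_right_less_imp_less) simp
  define x where "x = e(j := t)"
  have "t \<notin> e ` ?J" using e(2) \<open>M < \<bar>t\<bar>\<close> by fastforce
  have "inj_on x ?J" unfolding x_def using e(1) \<open>t \<notin> e ` ?J\<close> by (rule inj_on_fun_updI)
  moreover have "x j \<notin> x ` ?J" using \<open>t \<notin> e ` ?J\<close> by (auto simp: x_def)
  ultimately have "inj_on x (insert j ?J)" by (simp only: inj_on_insert) simp
  hence inj: "inj_on x {..<n}" using \<open>j < n\<close> by (simp add: insert_absorb)
  have "(\<Prod>k<n. x k) = x j * (\<Prod>k\<in>?J. x k)" using \<open>j < n\<close> by (intro prod.remove) auto
  also have "(\<Prod>k\<in>?J. x k) = (\<Prod>k\<in>?J. e k)" by (intro prod.cong) (auto simp: x_def)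
  finally have prod: "(\<Prod>k<n. x k) = 1" using prod_t by (simp add: x_def mult.commute)
  have roots: "poly p (x k) = 0" if "k < n" for k using that t(1) e(2) by (auto simp: x_def)
  obtain A :: "int mat" where "A \<in> carrier_mat n n" "det A = 1"
    "similar_mat (map_mat real_of_int A) (mat_diag n x)"
    using int_matrix_similar_diag_of_roots[OF p(1,2,4) inj roots prod] by blast
  thus ?thesis using \<open>M < \<bar>t\<bar>\<close> unfolding x_def by blast
qed

lemma Ints_coeff_prod:
  fixes f :: "'i \<Rightarrow> 'a::comm_ring_1 poly"
  assumes "\<And>i j. i \<in> I \<Longrightarrow> coeff (f i) j \<in> \<int>"
  shows "coeff (\<Prod>i\<in>I. f i) j \<in> \<int>"
  using assms
proof (induction I arbitrary: j rule: infinite_finite_induct)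
  case (insert i I)
  thus ?case by (auto simp: coeff_mult intro!: Ints_sum Ints_mult)
qed (auto simp: coeff_1)

lemma prod_diff_opposite_signs:
  fixes R :: "real set"
  assumes "finite R" "\<rho> \<in> R" "\<delta> > 0" and sep: "\<And>\<sigma>. \<sigma> \<in> R \<Longrightarrow> \<sigma> \<noteq> \<rho> \<Longrightarrow> \<delta> < \<bar>\<rho> - \<sigma>\<bar>"
  shows "(\<Prod>\<sigma>\<in>R. \<rho> - \<delta> - \<sigma>) * (\<Prod>\<sigma>\<in>R. \<rho> + \<delta> - \<sigma>) < 0"
proof -
  have "(\<Prod>\<sigma>\<in>R. \<rho> - \<delta> - \<sigma>) * (\<Prod>\<sigma>\<in>R. \<rho> + \<delta> - \<sigma>) = (\<Prod>\<sigma>\<in>R. (\<rho> - \<sigma>)\<^sup>2 - \<delta>\<^sup>2)"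
    by (simp add: prod.distrib[symmetric] power2_eq_square algebra_simps)
  also have "\<dots> = - \<delta>\<^sup>2 * (\<Prod>\<sigma>\<in>R - {\<rho>}. (\<rho> - \<sigma>)\<^sup>2 - \<delta>\<^sup>2)"
    using assms(1,2) by (simp add: prod.remove)
  also have "\<dots> < 0"
  proof (rule mult_neg_pos)
    show "0 < (\<Prod>\<sigma>\<in>R - {\<rho>}. (\<rho> - \<sigma>)\<^sup>2 - \<delta>\<^sup>2)"
    proof (rule prod_pos)
      fix \<sigma> assume "\<sigma> \<in> R - {\<rho>}"
      hence "\<delta>\<^sup>2 < \<bar>\<rho> - \<sigma>\<bar>\<^sup>2" using sep assms(3) by (intro power_strict_mono) auto
      thus "0 < (\<rho> - \<sigma>)\<^sup>2 - \<delta>\<^sup>2" by simp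
    qed
  qed (use assms(3) in simp)
  finally show ?thesis .
qed

lemma eventually_opposite_signs:
  fixes a b u v :: real
  assumes "u * v < 0"
  shows "\<forall>\<^sub>F y in at_top. (a - y * u) * (b - y * v) < 0"
proof -
  have "((\<lambda>y. (a / y - u) * (b / y - v)) \<longlongrightarrow> (0 - u) * (0 - v)) at_top"
    by (intro tendsto_intros tendsto_divide_0[OF tendsto_const]
        filterlim_at_top_imp_at_infinity[OF filterlim_ident])
  hence "\<forall>\<^sub>F y in at_top. (a / y - u) * (b / y - v) < 0"
    using assms by (intro order_tendstoD(2)) auto
  with eventually_gt_at_top[of 0] show ?thesis
  proof eventually_elim
    case (elim y)
    have "(a - y * u) * (b - y * v) = y\<^sup>2 * ((a / y - u) * (b / y - v))"
      using elim(1) by (simp add: field_simps power2_eq_square)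
    thus ?case using elim by (simp add: mult_pos_neg)
  qed
qed

lemma eventually_roots_near_zeros:
  fixes q :: "real poly" and R :: "real set"
  assumes "finite R" "\<delta> > 0" and sep: "\<And>\<rho> \<sigma>. \<rho> \<in> R \<Longrightarrow> \<sigma> \<in> R \<Longrightarrow> \<rho> \<noteq> \<sigma> \<Longrightarrow> \<delta> < \<bar>\<rho> - \<sigma>\<bar>"
  shows "\<forall>\<^sub>F y in at_top. \<forall>\<rho>\<in>R.
           \<exists>x. \<bar>x - \<rho>\<bar> < \<delta> \<and> poly (q - smult y (\<Prod>\<sigma>\<in>R. [:- \<sigma>, 1:])) x = 0"
proof -
  let ?f = "\<lambda>y x. poly (q - smult y (\<Prod>\<sigma>\<in>R. [:- \<sigma>, 1:])) x"
  have "\<forall>\<^sub>F y in at_top. ?f y (\<rho> - \<delta>) * ?f y (\<rho> + \<delta>) < 0" if "\<rho> \<in> R" for \<rho>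
    using eventually_opposite_signs[OF prod_diff_opposite_signs[OF assms(1) that assms(2) sep]]
    by (simp add: poly_prod that)
  hence "\<forall>\<^sub>F y in at_top. \<forall>\<rho>\<in>R. ?f y (\<rho> - \<delta>) * ?f y (\<rho> + \<delta>) < 0"
    by (intro eventually_ball_finite assms(1) ballI)
  thus ?thesis
  proof eventually_elim
    case (elim y)
    show ?case
    proof
      fix \<rho> assume "\<rho> \<in> R"
      hence "?f y (\<rho> - \<delta>) * ?f y (\<rho> + \<delta>) < 0" using elim by blast
      from poly_IVT[OF _ this] assms(2)
      obtain x where "\<rho> - \<delta> < x" "x < \<rho> + \<delta>" "?f y x = 0" by auto
      thus "\<exists>x. \<bar>x - \<rho>\<bar> < \<delta> \<and> ?f y x = 0" by (intro exI[of _ x]) auto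
    qed
  qed
qed

text \<open>The polynomial is \<open>x\<^sup>n + s - y \<Prod>\<rho>\<in>R. (x - \<rho>)\<close> for a large integer multiple \<open>y\<close> of
  \<open>b\<^bsup>card R\<^esup>\<close>, which clears the denominators of \<open>R\<close>; since \<open>0 \<in> R\<close>, the constant coefficient
  stays \<open>s\<close>.\<close>

lemma monic_int_poly_roots_near:
  fixes R :: "real set" and b s \<delta> :: real
  assumes R: "finite R" "0 \<in> R" "card R < n"
    and b: "b \<in> \<int>" "b > 0" "\<And>\<rho>. \<rho> \<in> R \<Longrightarrow> b * \<rho> \<in> \<int>"
    and "s \<in> \<int>" "\<delta> > 0"
    and sep: "\<And>\<rho> \<sigma>. \<rho> \<in> R \<Longrightarrow> \<sigma> \<in> R \<Longrightarrow> \<rho> \<noteq> \<sigma> \<Longrightarrow> \<delta> < \<bar>\<rho> - \<sigma>\<bar>"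
  shows "\<exists>p. degree p = n \<and> lead_coeff p = 1 \<and> coeff p 0 = s \<and> (\<forall>j. coeff p j \<in> \<int>)
           \<and> (\<forall>\<rho>\<in>R. \<exists>x. \<bar>x - \<rho>\<bar> < \<delta> \<and> poly p x = 0)"
proof -
  define k where "k = card R"
  define H where "H = (\<Prod>\<sigma>\<in>R. [:- \<sigma>, 1:])"
  define P where "P y = monom 1 n + [:s:] - smult y H" for y
  have "degree H = k" using R(1) by (simp add: H_def k_def degree_prod_eq_sum_degree)
  hence H_high: "coeff H j = 0" if "j \<ge> n" for j using R(3) that by (simp add: k_def coeff_eq_0)
  have "coeff H 0 = 0" using R by (simp add: H_def poly_0_coeff_0[symmetric] poly_prod)
  have H_int: "coeff (smult (b ^ k) H) j \<in> \<int>" for j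
  proof -
    have "smult (b ^ k) H = (\<Prod>\<sigma>\<in>R. [:- (b * \<sigma>), b:])"
      using prod_smult[of "\<lambda>_. b" "\<lambda>\<sigma>. [:- \<sigma>, 1:]" R] by (simp add: H_def k_def)
    thus ?thesis using b by (auto simp: coeff_pCons split: nat.split intro!: Ints_coeff_prod)
  qed
  have scale: "filterlim (\<lambda>K. real K * b ^ k) at_top sequentially"
    by (intro filterlim_at_top_mult_tendsto_pos[OF tendsto_const] filterlim_real_sequentially)
      (use b in simp)
  have "\<forall>\<^sub>F K in sequentially. \<forall>\<rho>\<in>R. \<exists>x. \<bar>x - \<rho>\<bar> < \<delta> \<and> poly (P (real K * b ^ k)) x = 0"
    unfolding P_def H_def
    by (rule eventually_compose_filterlim[OF eventually_roots_near_zeros[OF R(1) \<open>\<delta> > 0\<close> sep] scale])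
  then obtain K :: nat where roots: "\<forall>\<rho>\<in>R. \<exists>x. \<bar>x - \<rho>\<bar> < \<delta> \<and> poly (P (real K * b ^ k)) x = 0"
    unfolding eventually_sequentially by blast
  have coeff_P: "coeff (P y) j = (if j = n then 1 else 0) + (if j = 0 then s else 0) - y * coeff H j"
    for y j by (simp add: P_def coeff_monom coeff_pCons split: nat.split)
  have "degree (P y) = n" for y
    using R(3) by (intro antisym degree_le le_degree) (auto simp: coeff_P H_high)
  moreover have "coeff (P (real K * b ^ k)) j \<in> \<int>" for j
    using H_int[of j] \<open>s \<in> \<int>\<close> by (auto simp: coeff_P mult.assoc intro!: Ints_diff Ints_add Ints_mult)
  ultimately show ?thesis
    using roots R(3) \<open>coeff H 0 = 0\<close> by (intro exI[of _ "P (real K * b ^ k)"]) (auto simp: coeff_P H_high)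
qed

lemma exists_separation_radius:
  fixes c :: "'i \<Rightarrow> real"
  assumes "finite I" "e > 0"
  shows "\<exists>\<delta>>0. \<delta> < e \<and> (\<forall>i\<in>I. \<forall>j\<in>I. c i \<noteq> c j \<longrightarrow> 2 * \<delta> < \<bar>c i - c j\<bar>)"
proof -
  define D where "D = (\<lambda>(i, j). \<bar>c i - c j\<bar>) ` {(i, j) \<in> I \<times> I. c i \<noteq> c j}"
  define d where "d = Min (insert e D)"
  have "finite D" unfolding D_def
    by (rule finite_imageI, rule finite_subset[of _ "I \<times> I"]) (use assms(1) in auto)
  have "\<forall>x\<in>D. x > 0" by (auto simp: D_def)
  hence "d > 0" using \<open>finite D\<close> assms(2) by (simp add: d_def)
  have "d \<le> e" using \<open>finite D\<close> by (simp add: d_def)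
  have d_le: "d \<le> \<bar>c i - c j\<bar>" if "i \<in> I" "j \<in> I" "c i \<noteq> c j" for i j
  proof -
    have "\<bar>c i - c j\<bar> \<in> D" using that by (auto simp: D_def intro!: image_eqI[of _ _ "(i, j)"])
    thus ?thesis using \<open>finite D\<close> by (simp add: d_def)
  qed
  show ?thesis
  proof (intro exI[of _ "d / 3"] conjI ballI impI)
    fix i j assume "i \<in> I" "j \<in> I" "c i \<noteq> c j"
    thus "2 * (d / 3) < \<bar>c i - c j\<bar>" using d_le[of i j] \<open>d > 0\<close> by linarith
  qed (use \<open>d > 0\<close> \<open>d \<le> e\<close> in auto)
qed

lemma monic_int_poly_roots_near_points:
  fixes c :: "'i \<Rightarrow> real" and b s \<epsilon> :: real
  assumes I: "finite I" "inj_on c I" "0 \<in> c ` I" "card I < n"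
    and b: "b \<in> \<int>" "b > 0" "\<And>i. i \<in> I \<Longrightarrow> b * c i \<in> \<int>"
    and "s \<in> \<int>" "\<epsilon> > 0"
  shows "\<exists>p e. degree p = n \<and> lead_coeff p = 1 \<and> coeff p 0 = s \<and> (\<forall>j. coeff p j \<in> \<int>)
           \<and> inj_on e I \<and> (\<forall>i\<in>I. \<bar>e i - c i\<bar> < \<epsilon> \<and> poly p (e i) = 0)"
proof -
  obtain \<delta> where "\<delta> > 0" "\<delta> < \<epsilon>" and sep: "\<forall>i\<in>I. \<forall>j\<in>I. c i \<noteq> c j \<longrightarrow> 2 * \<delta> < \<bar>c i - c j\<bar>"
    using exists_separation_radius[OF I(1) \<open>\<epsilon> > 0\<close>] by blast
  have sep': "\<delta> < \<bar>\<rho> - \<sigma>\<bar>" if "\<rho> \<in> c ` I" "\<sigma> \<in> c ` I" "\<rho> \<noteq> \<sigma>" for \<rho> \<sigma>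
  proof -
    from that obtain i j where "i \<in> I" "j \<in> I" "\<rho> = c i" "\<sigma> = c j" by blast
    with sep that(3) have "2 * \<delta> < \<bar>\<rho> - \<sigma>\<bar>" by blast
    thus ?thesis using \<open>\<delta> > 0\<close> by linarith
  qed
  have "finite (c ` I)" "card (c ` I) < n" "\<And>\<rho>. \<rho> \<in> c ` I \<Longrightarrow> b * \<rho> \<in> \<int>"
    using I b(3) by (auto simp: card_image)
  from monic_int_poly_roots_near[OF this(1) I(3) this(2) b(1,2) this(3) \<open>s \<in> \<int>\<close> \<open>\<delta> > 0\<close> sep']
  obtain p where p: "degree p = n" "lead_coeff p = 1" "coeff p 0 = s" "\<forall>j. coeff p j \<in> \<int>"
    and roots: "\<forall>\<rho>\<in>c ` I. \<exists>x. \<bar>x - \<rho>\<bar> < \<delta> \<and> poly p x = 0"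
    by blast
  hence "\<forall>i\<in>I. \<exists>x. \<bar>x - c i\<bar> < \<delta> \<and> poly p x = 0" by blast
  then obtain e where e: "\<forall>i\<in>I. \<bar>e i - c i\<bar> < \<delta> \<and> poly p (e i) = 0"
    by (auto dest: bchoice)
  have "inj_on e I"
  proof (rule inj_onI)
    fix i j assume "i \<in> I" "j \<in> I" "e i = e j"
    moreover have "\<bar>e i - c i\<bar> < \<delta>" "\<bar>e j - c j\<bar> < \<delta>" using e \<open>i \<in> I\<close> \<open>j \<in> I\<close> by auto
    ultimately have "\<bar>c i - c j\<bar> < 2 * \<delta>" by (simp add: abs_less_iff)
    have "c i = c j"
    proof (rule ccontr)
      assume "c i \<noteq> c j"
      with sep \<open>i \<in> I\<close> \<open>j \<in> I\<close> have "2 * \<delta> < \<bar>c i - c j\<bar>" by blast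
      thus False using \<open>\<bar>c i - c j\<bar> < 2 * \<delta>\<close> by linarith
    qed
    thus "i = j" using inj_onD[OF I(2)] \<open>i \<in> I\<close> \<open>j \<in> I\<close> by blast
  qed
  moreover have "\<forall>i\<in>I. \<bar>e i - c i\<bar> < \<epsilon> \<and> poly p (e i) = 0" using e \<open>\<delta> < \<epsilon>\<close> by force
  ultimately show ?thesis using p by blast
qed

lemma rational_approximations_distinct_nonzero:
  fixes \<mu> :: "nat \<Rightarrow> real"
  assumes "\<epsilon> > 0"
  shows "\<exists>b r. b \<in> \<int> \<and> b > 0 \<and> inj_on r {..<m}
           \<and> (\<forall>i<m. r i \<noteq> 0 \<and> b * r i \<in> \<int> \<and> \<bar>r i - \<mu> i\<bar> < \<epsilon>)"
proof -
  obtain N :: nat where N: "1 / \<epsilon> < N" using reals_Archimedean2 by blast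
  moreover have "0 < 1 / \<epsilon>" using assms by simp
  ultimately have "N > 0" by linarith
  \<comment> \<open>the numerators are distinct and nonzero because their residues mod \<open>m + 1\<close> are \<open>i + 1\<close>\<close>
  define k where "k = int m + 1"
  define a where "a i = k * \<lfloor>\<mu> i * N\<rfloor> + int i + 1" for i
  define b where "b = real_of_int k * N"
  have "b > 0" using \<open>N > 0\<close> by (simp add: b_def k_def)
  have a_mod: "a i mod k = int i + 1" if "i < m" for i
    using that by (simp add: a_def k_def add.assoc mod_pos_pos_trivial)
  have numerator_error: "\<bar>a i - b * \<mu> i\<bar> < k" if "i < m" for i
  proof -
    define d where "d = \<lfloor>\<mu> i * N\<rfloor> - \<mu> i * N"
    have "- 1 < d" "d \<le> 0" by (simp_all add: d_def) linarith+
    have "real_of_int k * (- 1) < k * d"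
      using \<open>- 1 < d\<close> by (intro mult_strict_left_mono) (simp_all add: k_def)
    moreover have "k * d \<le> 0" using \<open>d \<le> 0\<close> by (simp add: k_def mult_nonneg_nonpos)
    moreover have "a i - b * \<mu> i = k * d + (int i + 1)"
      by (simp add: a_def b_def d_def algebra_simps)
    ultimately show ?thesis using that by (simp add: k_def abs_less_iff)
  qed
  have "\<bar>a i / b - \<mu> i\<bar> < \<epsilon>" if "i < m" for i
  proof -
    have "\<bar>a i / b - \<mu> i\<bar> = \<bar>a i - b * \<mu> i\<bar> / b"
      using \<open>b > 0\<close> by (simp add: abs_div_pos diff_divide_distrib)
    also have "\<dots> < k / b"
      using \<open>b > 0\<close> numerator_error[OF that] by (simp add: divide_strict_right_mono)
    also have "k / b = 1 / N" by (simp add: b_def k_def)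
    also have "\<dots> < \<epsilon>" using N \<open>N > 0\<close> assms by (simp add: field_simps)
    finally show ?thesis .
  qed
  moreover have "inj_on (\<lambda>i. a i / b) {..<m}"
  proof (rule inj_onI)
    fix i j assume "i \<in> {..<m}" "j \<in> {..<m}" "a i / b = a j / b"
    hence "a i mod k = a j mod k" using \<open>b > 0\<close> by simp
    thus "i = j" using a_mod \<open>i \<in> {..<m}\<close> \<open>j \<in> {..<m}\<close> by simp
  qed
  moreover have "a i \<noteq> 0" if "i < m" for i using a_mod[OF that] by auto
  moreover have "b \<in> \<int>" "b * (a i / b) \<in> \<int>" for i using \<open>b > 0\<close> by (simp_all add: b_def)
  ultimately show ?thesis using \<open>b > 0\<close> by (intro exI[of _ b] exI[of _ "\<lambda>i. a i / b"]) simp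
qed

lemma abs_plus_one_le_prod:
  fixes y :: "'i \<Rightarrow> real"
  assumes "finite I" "i \<in> I"
  shows "\<bar>y i\<bar> + 1 \<le> (\<Prod>j\<in>I. \<bar>y j\<bar> + 1)"
proof -
  have "(\<Prod>j\<in>I. \<bar>y j\<bar> + 1) = (\<bar>y i\<bar> + 1) * (\<Prod>j\<in>I - {i}. \<bar>y j\<bar> + 1)"
    using assms by (rule prod.remove)
  moreover have "1 \<le> (\<Prod>j\<in>I - {i}. \<bar>y j\<bar> + 1)" by (intro prod_ge_1) simp
  ultimately show ?thesis by (simp add: mult_le_cancel_left1)
qed

lemma abs_prod_insert_less:
  fixes x y :: "'i \<Rightarrow> real"
  assumes "finite I" "k \<notin> I" "\<bar>x k\<bar> < \<delta>" "\<And>i. i \<in> I \<Longrightarrow> \<bar>x i - y i\<bar> \<le> 1"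
  shows "\<bar>\<Prod>i\<in>insert k I. x i\<bar> < \<delta> * (\<Prod>i\<in>I. \<bar>y i\<bar> + 1)"
proof -
  have "\<bar>x i\<bar> \<le> \<bar>y i\<bar> + 1" if "i \<in> I" for i using assms(4)[OF that] by linarith
  hence "\<bar>\<Prod>i\<in>I. x i\<bar> \<le> (\<Prod>i\<in>I. \<bar>y i\<bar> + 1)" unfolding abs_prod by (intro prod_mono) auto
  hence "\<bar>\<Prod>i\<in>insert k I. x i\<bar> \<le> \<bar>x k\<bar> * (\<Prod>i\<in>I. \<bar>y i\<bar> + 1)"
    using assms(1,2) by (simp add: abs_mult mult_left_mono)
  also have "\<dots> < \<delta> * (\<Prod>i\<in>I. \<bar>y i\<bar> + 1)"
    using assms(3) prod_ge_1[of I "\<lambda>i. \<bar>y i\<bar> + 1"] by simp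
  finally show ?thesis .
qed

lemma int_matrix_similar_diag_near_points:
  fixes r :: "nat \<Rightarrow> real" and b \<epsilon> :: real
  assumes b: "b \<in> \<int>" "b > 0" and r: "inj_on r {..<m}" "\<And>i. i < m \<Longrightarrow> r i \<noteq> 0 \<and> b * r i \<in> \<int>"
    and "\<epsilon> > 0"
  shows "\<exists>A :: int mat. \<exists>x. A \<in> carrier_mat (m + 2) (m + 2) \<and> det A = 1
           \<and> similar_mat (map_mat real_of_int A) (mat_diag (m + 2) x)
           \<and> (\<forall>i<m. \<bar>x i - r i\<bar> < \<epsilon>) \<and> 1 / \<epsilon> < \<bar>x m\<bar> \<and> \<bar>x (m + 1)\<bar> < \<epsilon>"
proof -
  \<comment> \<open>\<open>J\<close> indexes the roots near \<open>r i\<close> and the small root \<open>m + 1\<close>; index \<open>m\<close> is left for the large one\<close>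
  define J where "J = insert (m + 1) {..<m}"
  define c where "c i = (if i < m then r i else 0)" for i
  define B where "B = (\<Prod>i\<in>J. \<bar>c i\<bar> + 1)"
  define M where "M = max B (1 / \<epsilon>)"
  define \<delta> where "\<delta> = 1 / (B * M)"
  have "B \<ge> 1" unfolding B_def by (intro prod_ge_1) simp
  hence "B * M \<ge> 1" using mult_mono[of 1 B 1 M] by (simp add: M_def)
  hence "\<delta> > 0" "\<delta> \<le> 1" "\<delta> * B = 1 / M" using \<open>B \<ge> 1\<close> by (simp_all add: \<delta>_def)
  have "M > 0" "1 / \<epsilon> \<le> M" using \<open>B \<ge> 1\<close> by (auto simp: M_def)
  have "\<delta> \<le> 1 / M" using \<open>B \<ge> 1\<close> \<open>M > 0\<close> by (simp add: \<delta>_def field_simps)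
  also have "\<dots> \<le> \<epsilon>" using \<open>1 / \<epsilon> \<le> M\<close> \<open>\<epsilon> > 0\<close> \<open>M > 0\<close> by (simp add: field_simps)
  finally have "\<delta> \<le> \<epsilon>" .
  have "inj_on c J" using r by (auto simp: J_def c_def inj_on_def)
  moreover have "0 \<in> c ` J" "card J < m + 2" "\<And>i. i \<in> J \<Longrightarrow> b * c i \<in> \<int>"
    using r by (auto simp: J_def c_def)
  ultimately obtain p e where p: "degree p = m + 2" "lead_coeff p = 1" "coeff p 0 = (-1) ^ (m + 2)"
      "\<forall>j. coeff p j \<in> \<int>" and e: "inj_on e J" "\<forall>i\<in>J. \<bar>e i - c i\<bar> < \<delta> \<and> poly p (e i) = 0"
    using monic_int_poly_roots_near_points[of J c "m + 2" b "(-1) ^ (m + 2)" \<delta>] b \<open>\<delta> > 0\<close>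
    by (auto simp: J_def)
  have close: "\<bar>e i - c i\<bar> < \<delta>" if "i \<in> J" for i using e(2) that by blast
  have "\<bar>e i\<bar> \<le> M" if "i \<in> J" for i
  proof -
    have "\<bar>e i\<bar> \<le> \<bar>c i\<bar> + 1" using close[OF that] \<open>\<delta> \<le> 1\<close> by linarith
    also have "\<dots> \<le> B" unfolding B_def using that by (intro abs_plus_one_le_prod) (simp_all add: J_def)
    finally show ?thesis by (simp add: M_def)
  qed
  moreover have "\<bar>\<Prod>i\<in>J. e i\<bar> < 1 / M"
  proof -
    have "\<bar>\<Prod>i\<in>J. e i\<bar> < \<delta> * (\<Prod>i<m. \<bar>c i\<bar> + 1)" unfolding J_def
      using close \<open>\<delta> \<le> 1\<close> by (intro abs_prod_insert_less) (force simp: J_def c_def)+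
    also have "(\<Prod>i<m. \<bar>c i\<bar> + 1) = B" by (simp add: B_def J_def c_def)
    finally show ?thesis using \<open>\<delta> * B = 1 / M\<close> by simp
  qed
  moreover have "J = {..<m + 2} - {m}" by (auto simp: J_def)
  ultimately obtain A t where "A \<in> carrier_mat (m + 2) (m + 2)" "det A = 1"
    "similar_mat (map_mat real_of_int A) (mat_diag (m + 2) (e(m := t)))" and "M < \<bar>t\<bar>"
    using int_matrix_similar_diag_completing_roots[OF p(1-3), of m e M] p(4) e by auto
  moreover have "\<bar>e i - r i\<bar> < \<epsilon>" if "i < m" for i
    using close[of i] that \<open>\<delta> \<le> \<epsilon>\<close> by (simp add: J_def c_def)
  moreover have "\<bar>e (m + 1)\<bar> < \<epsilon>" using close[of "m + 1"] \<open>\<delta> \<le> \<epsilon>\<close> by (simp add: J_def c_def)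
  moreover have "1 / \<epsilon> < \<bar>t\<bar>" using \<open>M < \<bar>t\<bar>\<close> by (simp add: M_def)
  ultimately show ?thesis by (intro exI[of _ A] exI[of _ "e(m := t)"]) auto
qed

theorem mainTheorem6:
  fixes n :: nat and \<epsilon> :: real and \<mu> :: "nat \<Rightarrow> real"
  assumes "n \<ge> 2" and "\<epsilon> > 0"
  shows "\<exists>A :: int mat. A \<in> carrier_mat n n \<and> det A = 1 \<and>
           (\<exists>ev :: nat \<Rightarrow> real.
              similar_mat (map_mat real_of_int A) (mat_diag n ev) \<and>
              (\<forall>i < n - 2. \<bar>ev i - \<mu> i\<bar> < \<epsilon>) \<and>
              \<bar>ev (n - 2)\<bar> > 1 / \<epsilon> \<and> \<bar>ev (n - 1)\<bar> < \<epsilon>)"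
proof -
  define m where "m = n - 2"
  have n: "n = m + 2" "n - 1 = m + 1" using \<open>n \<ge> 2\<close> by (simp_all add: m_def)
  obtain b r where "b \<in> \<int>" "b > 0" "inj_on r {..<m}"
    and r: "\<And>i. i < m \<Longrightarrow> r i \<noteq> 0 \<and> b * r i \<in> \<int> \<and> \<bar>r i - \<mu> i\<bar> < \<epsilon> / 2"
    using rational_approximations_distinct_nonzero[where \<epsilon> = "\<epsilon> / 2" and m = m and \<mu> = \<mu>] \<open>\<epsilon> > 0\<close>
    by auto
  then obtain A x where A: "A \<in> carrier_mat n n" "det A = 1"
      "similar_mat (map_mat real_of_int A) (mat_diag n x)"
    and x: "\<forall>i<m. \<bar>x i - r i\<bar> < \<epsilon> / 2" "2 / \<epsilon> < \<bar>x m\<bar>" "\<bar>x (m + 1)\<bar> < \<epsilon> / 2"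
    using int_matrix_similar_diag_near_points[where \<epsilon> = "\<epsilon> / 2" and m = m and r = r and b = b] \<open>\<epsilon> > 0\<close>
    unfolding n by auto
  have "\<bar>x i - \<mu> i\<bar> < \<epsilon>" if "i < n - 2" for i
  proof -
    have "\<bar>x i - r i\<bar> < \<epsilon> / 2" "\<bar>r i - \<mu> i\<bar> < \<epsilon> / 2" using x(1) r that by (auto simp: m_def)
    thus ?thesis by linarith
  qed
  moreover have "1 / \<epsilon> < \<bar>x (n - 2)\<bar>"
    using x(2) \<open>\<epsilon> > 0\<close> divide_strict_right_mono[of 1 2 \<epsilon>] by (simp add: m_def)
  moreover have "\<bar>x (n - 1)\<bar> < \<epsilon>" using x(3) \<open>\<epsilon> > 0\<close> n(2) by simp
  ultimately show ?thesis using A by blast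
qed

end
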